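(* Let $(N,+,* )$ be a planar nearring presented by $(\Phi,R,M)$, and let $d\in D(N)$ be nonzero and not a zero multiplier. Then $d\Phi^*=d\Phi\cup\{0\}$ is a subnearring of $N$ which is a planar nearfield (with multiplicative identity $r_d$).
   Context: A (right) nearring $(N,+,* )$ is a set with a group $(N,+)$, a semigroup $(N,* )$, and right distributivity $(a+b)*c=a*c+b*c$. $N$ is planar if the relation $a\cong b$ ($x*a=x*b$ for all $x$) has at least $3$ classes and for all $a,b,c$ with $a\not\cong b$ the equation $x*a=x*b+c$ has a unique solution. A nearfield is a nearring in which $(N\setminus\{0\},* )$ is a group; a subnearring is a subset closed under $+$, additive inverses and $*$. Every planar nearring arises as follows, and we always consider it so presented. $\Phi\le \mathrm{Aut}(N,+)$ acts on the right, is fixed point free, and $n\mapsto -n+n\phi$ is bijective for each $\phi\ne\mathrm{id}$. $R$ is a set of representatives of the $\Phi$-orbits of $N\setminus\{0\}$ and $M\subseteq R$. Each $a\ne0$ is uniquely $a=r_a\phi_a$, $r_a\in R$, $\phi_a\in\Phi$. Multiplication: $a*b=0$ if $b=0$ or $r_b\in M$, else $a*b=a\phi_b$ (and $0*b=0$). The zero multipliers are the elements of $M\Phi\cup\{0\}$, i.e. those $n$ with $x*n=0$ for all $x$. $D(N)=\{n: n*(a+b)=n*a+n*b\ \forall a,b\}$. *)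

theory Defs
  imports Main "HOL-Algebra.Group"
begin

text \<open>The additive group (N,+) is the type 'a of class group_add (not necessarily
commutative). Automorphisms act on the right: n\<phi> is written \<phi> n.\<close>

definition is_nearring :: "('a::group_add \<Rightarrow> 'a \<Rightarrow> 'a) \<Rightarrow> bool" where
  "is_nearring mul \<longleftrightarrow>
     (\<forall>a b c. mul (mul a b) c = mul a (mul b c)) \<and>
     (\<forall>a b c. mul (a + b) c = mul a c + mul b c)"

definition cong_rel :: "'a set \<Rightarrow> ('a \<Rightarrow> 'a \<Rightarrow> 'a) \<Rightarrow> 'a \<Rightarrow> 'a \<Rightarrow> bool" where
  "cong_rel S mul a b \<longleftrightarrow> (\<forall>x\<in>S. mul x a = mul x b)"

definition planar_on :: "'a::group_add set \<Rightarrow> ('a \<Rightarrow> 'a \<Rightarrow> 'a) \<Rightarrow> bool" where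
  "planar_on S mul \<longleftrightarrow>
     (\<exists>a\<in>S. \<exists>b\<in>S. \<exists>c\<in>S. \<not> cong_rel S mul a b \<and> \<not> cong_rel S mul a c \<and> \<not> cong_rel S mul b c) \<and>
     (\<forall>a\<in>S. \<forall>b\<in>S. \<forall>c\<in>S. \<not> cong_rel S mul a b \<longrightarrow> (\<exists>!x. x \<in> S \<and> mul x a = mul x b + c))"

definition subnearring :: "'a::group_add set \<Rightarrow> ('a \<Rightarrow> 'a \<Rightarrow> 'a) \<Rightarrow> bool" where
  "subnearring S mul \<longleftrightarrow>
     (\<forall>a\<in>S. \<forall>b\<in>S. a + b \<in> S) \<and> (\<forall>a\<in>S. - a \<in> S) \<and> (\<forall>a\<in>S. \<forall>b\<in>S. mul a b \<in> S)"

definition nearfield_on :: "'a::group_add set \<Rightarrow> ('a \<Rightarrow> 'a \<Rightarrow> 'a) \<Rightarrow> 'a \<Rightarrow> bool" where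
  "nearfield_on S mul e \<longleftrightarrow> group \<lparr>carrier = S - {0}, monoid.mult = mul, monoid.one = e\<rparr>"

definition planar_presentation :: "('a::group_add \<Rightarrow> 'a) set \<Rightarrow> 'a set \<Rightarrow> 'a set \<Rightarrow> bool" where
  "planar_presentation \<Phi> R M \<longleftrightarrow>
     (\<forall>\<phi>\<in>\<Phi>. bij \<phi> \<and> (\<forall>x y. \<phi> (x + y) = \<phi> x + \<phi> y)) \<and>
     id \<in> \<Phi> \<and> (\<forall>\<phi>\<in>\<Phi>. \<forall>\<psi>\<in>\<Phi>. \<phi> \<circ> \<psi> \<in> \<Phi>) \<and> (\<forall>\<phi>\<in>\<Phi>. Hilbert_Choice.inv \<phi> \<in> \<Phi>) \<and>
     (\<forall>\<phi>\<in>\<Phi>. \<phi> \<noteq> id \<longrightarrow> (\<forall>n. \<phi> n = n \<longrightarrow> n = 0)) \<and>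
     (\<forall>\<phi>\<in>\<Phi>. \<phi> \<noteq> id \<longrightarrow> bij (\<lambda>n. - n + \<phi> n)) \<and>
     0 \<notin> R \<and> (\<forall>a. a \<noteq> 0 \<longrightarrow> (\<exists>!r. r \<in> R \<and> (\<exists>\<phi>\<in>\<Phi>. a = \<phi> r))) \<and>
     M \<subseteq> R"

definition rep :: "('a::group_add \<Rightarrow> 'a) set \<Rightarrow> 'a set \<Rightarrow> 'a \<Rightarrow> 'a" where
  "rep \<Phi> R a = (THE r. r \<in> R \<and> (\<exists>\<phi>\<in>\<Phi>. a = \<phi> r))"

definition phi_of :: "('a::group_add \<Rightarrow> 'a) set \<Rightarrow> 'a set \<Rightarrow> 'a \<Rightarrow> ('a \<Rightarrow> 'a)" where
  "phi_of \<Phi> R a = (THE \<phi>. \<phi> \<in> \<Phi> \<and> a = \<phi> (rep \<Phi> R a))"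

definition pmult :: "('a::group_add \<Rightarrow> 'a) set \<Rightarrow> 'a set \<Rightarrow> 'a set \<Rightarrow> 'a \<Rightarrow> 'a \<Rightarrow> 'a" where
  "pmult \<Phi> R M a b = (if b = 0 \<or> rep \<Phi> R b \<in> M then 0 else phi_of \<Phi> R b a)"

definition distributive_elems :: "('a::group_add \<Rightarrow> 'a \<Rightarrow> 'a) \<Rightarrow> 'a set" where
  "distributive_elems mul = {n. \<forall>a b. mul n (a + b) = mul n a + mul n b}"

definition zero_multipliers :: "('a::group_add \<Rightarrow> 'a \<Rightarrow> 'a) \<Rightarrow> 'a set" where
  "zero_multipliers mul = {n. \<forall>x. mul x n = 0}"

end

theory Submission
  imports Defs
begin

text \<open>For d \<in> D(N) the set dN is closed under addition and negation by distributivity and under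
right multiplication by associativity, so it is a subnearring; planarity descends to it because
a solution x of x*a = x*b + c with c = d*w can be replaced by d*x', where x' solves
x'*a = x'*b + w. In the presented nearring, dN is d\<Phi> \<union> {0} = r_d\<Phi> \<union> {0} as soon as r_d \<notin> M, and on
this orbit multiplication is (\<phi> r_d)*(\<psi> r_d) = (\<psi> \<circ> \<phi>) r_d, so its nonzero part is a copy of \<Phi>
with identity r_d.\<close>

definition orbit :: "('a \<Rightarrow> 'a) set \<Rightarrow> 'a \<Rightarrow> 'a set" where
  "orbit \<Phi> a = (\<lambda>\<phi>. \<phi> a) ` \<Phi>"

lemma distributive_mult_zero:
  fixes mul :: "'a::group_add \<Rightarrow> 'a \<Rightarrow> 'a"
  assumes "d \<in> distributive_elems mul"
  shows "mul d 0 = 0"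
proof -
  have "mul d (0 + 0) = mul d 0 + mul d 0"
    using assms unfolding distributive_elems_def by blast
  then have "mul d 0 + mul d 0 = mul d 0 + 0" by simp
  then show ?thesis by (rule add_left_imp_eq)
qed

lemma subnearring_range_mult:
  fixes mul :: "'a::group_add \<Rightarrow> 'a \<Rightarrow> 'a"
  assumes nearring: "is_nearring mul" and d: "d \<in> distributive_elems mul"
  shows "subnearring (range (mul d)) mul"
proof -
  have distrib: "mul d (u + v) = mul d u + mul d v" for u v
    using d unfolding distributive_elems_def by blast
  have "- mul d u = mul d (- u)" for u
  proof (rule minus_unique)
    show "mul d u + mul d (- u) = 0"
      using distrib[of u "- u"] distributive_mult_zero[OF d] by simp
  qed
  moreover have "mul d u + mul d v = mul d (u + v)" for u v
    using distrib by simp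
  moreover have "mul (mul d u) b = mul d (mul u b)" for u b
    using nearring unfolding is_nearring_def by blast
  ultimately show ?thesis
    unfolding subnearring_def by auto
qed

lemma planar_on_range_mult:
  fixes mul :: "'a::group_add \<Rightarrow> 'a \<Rightarrow> 'a"
  assumes nearring: "is_nearring mul" and planar: "planar_on UNIV mul"
    and d: "d \<in> distributive_elems mul"
    and triple: "\<exists>a\<in>range (mul d). \<exists>b\<in>range (mul d). \<exists>c\<in>range (mul d).
      \<not> cong_rel (range (mul d)) mul a b \<and> \<not> cong_rel (range (mul d)) mul a c
      \<and> \<not> cong_rel (range (mul d)) mul b c"
  shows "planar_on (range (mul d)) mul"
  unfolding planar_on_def
proof (intro conjI ballI impI)
  show "\<exists>a\<in>range (mul d). \<exists>b\<in>range (mul d). \<exists>c\<in>range (mul d).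
      \<not> cong_rel (range (mul d)) mul a b \<and> \<not> cong_rel (range (mul d)) mul a c
      \<and> \<not> cong_rel (range (mul d)) mul b c"
    by (rule triple)
next
  fix a b c
  assume "c \<in> range (mul d)" and noncong: "\<not> cong_rel (range (mul d)) mul a b"
  then obtain w where c: "c = mul d w" by blast
  have "\<not> cong_rel UNIV mul a b"
    using noncong unfolding cong_rel_def by blast
  then have unique: "\<exists>!x. mul x a = mul x b + c'" for c'
    using planar unfolding planar_on_def by blast
  obtain z where z: "mul z a = mul z b + w"
    using unique by blast
  have assoc: "mul (mul x y) u = mul x (mul y u)" for x y u
    using nearring unfolding is_nearring_def by blast
  have "mul (mul d z) a = mul d (mul z b + w)"
    using assoc z by simp
  also have "\<dots> = mul (mul d z) b + c"
    using d c assoc unfolding distributive_elems_def by simp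
  finally have "mul (mul d z) a = mul (mul d z) b + c" .
  then show "\<exists>!x. x \<in> range (mul d) \<and> mul x a = mul x b + c"
    using unique[of c] by blast
qed

locale presented_nearring =
  fixes \<Phi> :: "('a::group_add \<Rightarrow> 'a) set" and R M :: "'a set"
  assumes presentation: "planar_presentation \<Phi> R M"
begin

abbreviation mult :: "'a \<Rightarrow> 'a \<Rightarrow> 'a" where
  "mult \<equiv> pmult \<Phi> R M"

lemma presentation_axioms:
  "\<forall>\<phi>\<in>\<Phi>. bij \<phi> \<and> (\<forall>x y. \<phi> (x + y) = \<phi> x + \<phi> y)"
  "id \<in> \<Phi>" "\<forall>\<phi>\<in>\<Phi>. \<forall>\<psi>\<in>\<Phi>. \<phi> \<circ> \<psi> \<in> \<Phi>" "\<forall>\<phi>\<in>\<Phi>. Hilbert_Choice.inv \<phi> \<in> \<Phi>"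
  "\<forall>\<phi>\<in>\<Phi>. \<phi> \<noteq> id \<longrightarrow> (\<forall>n. \<phi> n = n \<longrightarrow> n = 0)"
  "0 \<notin> R" "\<forall>a. a \<noteq> 0 \<longrightarrow> (\<exists>!r. r \<in> R \<and> (\<exists>\<phi>\<in>\<Phi>. a = \<phi> r))"
  using presentation unfolding planar_presentation_def
  by - (elim conjE, assumption)+

lemma R_nonzero: "r \<in> R \<Longrightarrow> r \<noteq> 0"
  using presentation_axioms(6) by blast

lemma automorphism_add: "\<phi> \<in> \<Phi> \<Longrightarrow> \<phi> (x + y) = \<phi> x + \<phi> y"
  and automorphism_bij: "\<phi> \<in> \<Phi> \<Longrightarrow> bij \<phi>"
  using presentation_axioms(1) by blast+

lemmas id_mem = presentation_axioms(2)
  and comp_mem = presentation_axioms(3)[rule_format]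
  and inv_mem = presentation_axioms(4)[rule_format]
  and fixed_point_free = presentation_axioms(5)[rule_format]
  and unique_rep = presentation_axioms(7)[rule_format]

lemma automorphism_zero:
  assumes "\<phi> \<in> \<Phi>"
  shows "\<phi> 0 = 0"
proof -
  have "\<phi> 0 + \<phi> 0 = \<phi> 0 + 0"
    using automorphism_add[OF assms, of 0 0] by simp
  then show ?thesis by (rule add_left_imp_eq)
qed

lemma automorphism_eq_zero_iff:
  assumes "\<phi> \<in> \<Phi>"
  shows "\<phi> a = 0 \<longleftrightarrow> a = 0"
  using automorphism_zero[OF assms] bij_is_inj[OF automorphism_bij[OF assms]]
  by (metis injD)

lemma automorphism_apply_inv:
  assumes "\<phi> \<in> \<Phi>"
  shows "\<phi> (Hilbert_Choice.inv \<phi> x) = x" and "Hilbert_Choice.inv \<phi> (\<phi> x) = x"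
  using automorphism_bij[OF assms] by (simp_all add: bij_is_surj surj_f_inv_f bij_is_inj)

text \<open>Fixed point freeness makes \<Phi> act regularly on every nonzero orbit.\<close>
lemma automorphism_eqI:
  assumes "\<phi> \<in> \<Phi>" "\<psi> \<in> \<Phi>" "r \<noteq> 0" "\<phi> r = \<psi> r"
  shows "\<phi> = \<psi>"
proof -
  have "Hilbert_Choice.inv \<psi> \<circ> \<phi> \<in> \<Phi>"
    using assms(1,2) by (simp add: comp_mem inv_mem)
  moreover have "(Hilbert_Choice.inv \<psi> \<circ> \<phi>) r = r"
    using assms(2,4) by (simp add: automorphism_apply_inv)
  ultimately have "Hilbert_Choice.inv \<psi> \<circ> \<phi> = id"
    using fixed_point_free assms(3) by blast
  then have "\<phi> x = \<psi> x" for x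
    using automorphism_apply_inv(1)[OF assms(2), of "\<phi> x"] by (simp add: fun_eq_iff)
  then show ?thesis by blast
qed

lemma rep_phi_of:
  assumes "a \<noteq> 0"
  shows "rep \<Phi> R a \<in> R" "phi_of \<Phi> R a \<in> \<Phi>" "a = phi_of \<Phi> R a (rep \<Phi> R a)"
proof -
  have r: "rep \<Phi> R a \<in> R \<and> (\<exists>\<phi>\<in>\<Phi>. a = \<phi> (rep \<Phi> R a))"
    unfolding rep_def using theI'[OF unique_rep[OF assms]] .
  then show "rep \<Phi> R a \<in> R" by blast
  have "rep \<Phi> R a \<noteq> 0"
    using r R_nonzero by blast
  moreover obtain \<phi> where "\<phi> \<in> \<Phi>" "a = \<phi> (rep \<Phi> R a)"
    using r by blast
  ultimately have "\<exists>!\<phi>. \<phi> \<in> \<Phi> \<and> a = \<phi> (rep \<Phi> R a)"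
    using automorphism_eqI by (intro ex1I[of _ \<phi>]) auto
  then have "phi_of \<Phi> R a \<in> \<Phi> \<and> a = phi_of \<Phi> R a (rep \<Phi> R a)"
    unfolding phi_of_def by (rule theI')
  then show "phi_of \<Phi> R a \<in> \<Phi>" "a = phi_of \<Phi> R a (rep \<Phi> R a)" by blast+
qed

lemma rep_phi_of_apply:
  assumes "r \<in> R" "\<phi> \<in> \<Phi>"
  shows "rep \<Phi> R (\<phi> r) = r" "phi_of \<Phi> R (\<phi> r) = \<phi>"
proof -
  have r0: "r \<noteq> 0" using assms(1) by (rule R_nonzero)
  then have nz: "\<phi> r \<noteq> 0" using automorphism_eq_zero_iff[OF assms(2)] by blast
  show rep: "rep \<Phi> R (\<phi> r) = r"
    unfolding rep_def using assms by (intro the1_equality[OF unique_rep[OF nz]]) blast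
  show "phi_of \<Phi> R (\<phi> r) = \<phi>"
    using rep_phi_of[OF nz] assms(2) r0 by (metis automorphism_eqI rep)
qed

lemma pmult_zero_right: "mult x 0 = 0"
  unfolding pmult_def by simp

lemma pmult_apply_orbit:
  assumes "r \<in> R" "r \<notin> M" "\<phi> \<in> \<Phi>"
  shows "mult x (\<phi> r) = \<phi> x"
proof -
  have "\<phi> r \<noteq> 0"
    using R_nonzero[OF assms(1)] automorphism_eq_zero_iff[OF assms(3)] by blast
  then show ?thesis
    unfolding pmult_def using rep_phi_of_apply[OF assms(1,3)] assms(2) by simp
qed

lemma not_zero_multiplier:
  assumes "a \<notin> zero_multipliers mult"
  shows "a \<noteq> 0" "rep \<Phi> R a \<notin> M"
  using assms unfolding zero_multipliers_def pmult_def by auto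

lemma orbit_apply:
  assumes "\<psi> \<in> \<Phi>"
  shows "orbit \<Phi> (\<psi> r) = orbit \<Phi> r"
proof
  show "orbit \<Phi> (\<psi> r) \<subseteq> orbit \<Phi> r"
    unfolding orbit_def using assms comp_mem by (auto intro!: image_eqI[where x = "_ \<circ> \<psi>"])
  show "orbit \<Phi> r \<subseteq> orbit \<Phi> (\<psi> r)"
  proof
    fix y assume "y \<in> orbit \<Phi> r"
    then obtain \<phi> where "\<phi> \<in> \<Phi>" "y = \<phi> r" unfolding orbit_def by blast
    then have "y = (\<phi> \<circ> Hilbert_Choice.inv \<psi>) (\<psi> r)" "\<phi> \<circ> Hilbert_Choice.inv \<psi> \<in> \<Phi>"
      using assms by (simp_all add: automorphism_apply_inv comp_mem inv_mem)
    then show "y \<in> orbit \<Phi> (\<psi> r)" unfolding orbit_def by blast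
  qed
qed

lemma orbit_rep:
  assumes "a \<noteq> 0"
  shows "orbit \<Phi> a = orbit \<Phi> (rep \<Phi> R a)"
  using rep_phi_of[OF assms] orbit_apply by metis

lemma range_pmult:
  assumes "a \<noteq> 0" "rep \<Phi> R a \<notin> M"
  shows "range (mult a) = orbit \<Phi> a \<union> {0}"
proof
  show "range (mult a) \<subseteq> orbit \<Phi> a \<union> {0}"
    unfolding orbit_def pmult_def using rep_phi_of(2) by auto
  have "\<phi> a \<in> range (mult a)" if "\<phi> \<in> \<Phi>" for \<phi>
    using pmult_apply_orbit[OF rep_phi_of(1)[OF assms(1)] assms(2) that] by (metis rangeI)
  moreover have "0 \<in> range (mult a)"
    using pmult_zero_right by (metis rangeI)
  ultimately show "orbit \<Phi> a \<union> {0} \<subseteq> range (mult a)"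
    unfolding orbit_def by blast
qed

text \<open>With \<Phi> = {id} every element is congruent to 0 or to a right identity, so there
are only two congruence classes.\<close>
lemma exists_nonidentity:
  assumes "planar_on UNIV mult"
  shows "\<exists>\<tau>\<in>\<Phi>. \<tau> \<noteq> id"
proof (rule ccontr)
  assume "\<not> ?thesis"
  then have "(\<forall>x. mult x a = 0) \<or> (\<forall>x. mult x a = x)" for a
    unfolding pmult_def using rep_phi_of(2) by (metis id_apply)
  moreover obtain a b c where
    "\<not> cong_rel UNIV mult a b" "\<not> cong_rel UNIV mult a c" "\<not> cong_rel UNIV mult b c"
    using assms unfolding planar_on_def by blast
  ultimately show False unfolding cong_rel_def by metis
qed

lemma orbit_noncongruent_triple:
  assumes "r \<in> R" "r \<notin> M" and "\<tau> \<in> \<Phi>" "\<tau> \<noteq> id"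
  defines "S \<equiv> orbit \<Phi> r \<union> {0}"
  shows "\<exists>a\<in>S. \<exists>b\<in>S. \<exists>c\<in>S.
    \<not> cong_rel S mult a b \<and> \<not> cong_rel S mult a c \<and> \<not> cong_rel S mult b c"
proof -
  have r0: "r \<noteq> 0" using assms(1) by (rule R_nonzero)
  have rS: "r \<in> S" and \<tau>S: "\<tau> r \<in> S"
    unfolding S_def orbit_def using id_mem assms(3) by (auto intro: image_eqI[where x = id])
  have "mult x r = x" "mult x (\<tau> r) = \<tau> x" for x
    using pmult_apply_orbit[OF assms(1,2) id_mem, of x] pmult_apply_orbit[OF assms(1,2,3)] by simp_all
  moreover have "\<tau> r \<noteq> 0" "\<tau> r \<noteq> r"
    using automorphism_eq_zero_iff[OF assms(3)] r0 automorphism_eqI[OF assms(3) id_mem r0] assms(4)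
    by auto
  ultimately have "\<not> cong_rel S mult 0 r" "\<not> cong_rel S mult 0 (\<tau> r)" "\<not> cong_rel S mult r (\<tau> r)"
    unfolding cong_rel_def using r0 pmult_zero_right by (auto intro!: bexI[OF _ rS])
  moreover have "0 \<in> S" unfolding S_def by blast
  ultimately show ?thesis using rS \<tau>S by blast
qed

lemma nearfield_on_orbit:
  assumes nearring: "is_nearring mult" and "r \<in> R" "r \<notin> M"
  shows "nearfield_on (orbit \<Phi> r \<union> {0}) mult r"
proof -
  have "0 \<notin> orbit \<Phi> r"
    unfolding orbit_def using automorphism_eq_zero_iff R_nonzero[OF assms(2)] by auto
  then have carrier: "orbit \<Phi> r \<union> {0} - {0} = orbit \<Phi> r" by blast
  have mult_orbit: "mult (\<phi> r) (\<psi> r) = (\<psi> \<circ> \<phi>) r" if "\<psi> \<in> \<Phi>" for \<phi> \<psi>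
    using pmult_apply_orbit[OF assms(2,3) that] by simp
  have r_orbit: "r \<in> orbit \<Phi> r"
    unfolding orbit_def using id_mem by (auto intro: image_eqI[where x = id])
  show ?thesis
    unfolding nearfield_on_def carrier
  proof (rule groupI; simp only: partial_object.select_convs monoid.select_convs)
    show "mult x y \<in> orbit \<Phi> r" if xy: "x \<in> orbit \<Phi> r" "y \<in> orbit \<Phi> r" for x y
    proof -
      obtain \<phi> \<psi> where "\<phi> \<in> \<Phi>" "x = \<phi> r" "\<psi> \<in> \<Phi>" "y = \<psi> r"
        using xy unfolding orbit_def by blast
      then show ?thesis
        using mult_orbit comp_mem unfolding orbit_def by (metis image_eqI)
    qed
    show "r \<in> orbit \<Phi> r" by (rule r_orbit)
    show "mult (mult x y) z = mult x (mult y z)" for x y z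
      using nearring unfolding is_nearring_def by blast
    show "mult r x = x" if x: "x \<in> orbit \<Phi> r" for x
    proof -
      obtain \<psi> where "\<psi> \<in> \<Phi>" "x = \<psi> r"
        using x unfolding orbit_def by blast
      then show ?thesis using pmult_apply_orbit[OF assms(2,3)] by simp
    qed
    show "\<exists>y\<in>orbit \<Phi> r. mult y x = r" if x: "x \<in> orbit \<Phi> r" for x
    proof -
      obtain \<psi> where \<psi>: "\<psi> \<in> \<Phi>" "x = \<psi> r"
        using x unfolding orbit_def by blast
      then have "mult (Hilbert_Choice.inv \<psi> r) x = r"
        using pmult_apply_orbit[OF assms(2,3)] automorphism_apply_inv by simp
      moreover have "Hilbert_Choice.inv \<psi> r \<in> orbit \<Phi> r"
        unfolding orbit_def using inv_mem[OF \<psi>(1)] by blast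
      ultimately show ?thesis by blast
    qed
  qed
qed

end

theorem mainTheorem3:
  fixes \<Phi> :: "('a::group_add \<Rightarrow> 'a) set" and R M :: "'a set" and d :: 'a
  assumes "planar_presentation \<Phi> R M"
    and "is_nearring (pmult \<Phi> R M)"
    and "planar_on UNIV (pmult \<Phi> R M)"
    and "d \<in> distributive_elems (pmult \<Phi> R M)"
    and "d \<noteq> 0"
    and "d \<notin> zero_multipliers (pmult \<Phi> R M)"
  shows "subnearring ((\<lambda>\<phi>. \<phi> d) ` \<Phi> \<union> {0}) (pmult \<Phi> R M)
       \<and> nearfield_on ((\<lambda>\<phi>. \<phi> d) ` \<Phi> \<union> {0}) (pmult \<Phi> R M) (rep \<Phi> R d)
       \<and> planar_on ((\<lambda>\<phi>. \<phi> d) ` \<Phi> \<union> {0}) (pmult \<Phi> R M)"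
proof -
  interpret presented_nearring \<Phi> R M by unfold_locales (rule assms(1))
  have rep_d: "rep \<Phi> R d \<in> R" "rep \<Phi> R d \<notin> M"
    using not_zero_multiplier[OF assms(6)] rep_phi_of(1)[OF assms(5)] by blast+
  have range_d: "(\<lambda>\<phi>. \<phi> d) ` \<Phi> \<union> {0} = range (mult d)"
    using range_pmult[OF assms(5) rep_d(2)] unfolding orbit_def by simp
  have orbit_d: "orbit \<Phi> (rep \<Phi> R d) \<union> {0} = range (mult d)"
    using range_d orbit_rep[OF assms(5)] unfolding orbit_def by simp
  obtain \<tau> where "\<tau> \<in> \<Phi>" "\<tau> \<noteq> id"
    using exists_nonidentity[OF assms(3)] by blast
  then have "planar_on (range (mult d)) mult"
    using planar_on_range_mult[OF assms(2,3,4)] orbit_noncongruent_triple[OF rep_d]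
    unfolding orbit_d by blast
  then show ?thesis
    using subnearring_range_mult[OF assms(2,4)] nearfield_on_orbit[OF assms(2) rep_d]
    unfolding range_d orbit_d by blast
qed

end
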